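(* Let $\equiv_2$ be the equivalence relation on $\mathfrak S_n$ generated by the relations $bac\equiv_2 bca$ and $abc\equiv_2 acb$ for letters $a<b<c$ in three consecutive positions. Then two permutations of $\mathfrak S_n$ are $\equiv_2$-equivalent if and only if they have the same left-to-right minima (the same sequence of values $\sigma_j$ such that all letters to the left of $\sigma_j$ are greater than $\sigma_j$).
   Context: Permutations are words $\sigma_1\cdots\sigma_n$; the relations replace three adjacent letters forming one pattern by the same letters arranged as the other pattern, and conversely. *)

theory Defs
  imports Main
begin

definition is_perm :: "nat \<Rightarrow> nat list \<Rightarrow> bool" where
  "is_perm n w \<longleftrightarrow> distinct w \<and> set w = {1..n}"

inductive step2 :: "nat list \<Rightarrow> nat list \<Rightarrow> bool" where
  rule_bac: "a < b \<Longrightarrow> b < c \<Longrightarrow> step2 (u @ [b, a, c] @ v) (u @ [b, c, a] @ v)"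
| rule_abc: "a < b \<Longrightarrow> b < c \<Longrightarrow> step2 (u @ [a, b, c] @ v) (u @ [a, c, b] @ v)"

definition equiv2 :: "nat list \<Rightarrow> nat list \<Rightarrow> bool" where
  "equiv2 = equivclp step2"

definition ltr_minima :: "nat list \<Rightarrow> nat list" where
  "ltr_minima w = [w ! j. j \<leftarrow> [0..<length w], \<forall>i<j. w ! i > w ! j]"

end

theory Submission
  imports Defs
begin

text \<open>Each relation exchanges two adjacent letters that are preceded by a letter smaller than
  the larger of the two. That larger letter is therefore never a left-to-right minimum, and
  whether the smaller one is a minimum does not depend on it, so equivalent words have the same
  minima. Conversely, the largest letter \<open>M\<close> of a word can be carried to its end whenever it
  is not the first letter, since for letters \<open>x \<noteq> y\<close> below \<open>M\<close> one of the relations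
  links \<open>xMy\<close> and \<open>xyM\<close>. By induction on the length: if both words start with \<open>M\<close>,
  their tails have the same minima; otherwise both are equivalent to words ending in \<open>M\<close>
  whose remaining letters, in order, have the same minima as the original words.\<close>

lemma ltr_minima_Nil [simp]: "ltr_minima [] = []"
  by (simp add: ltr_minima_def)

lemma ltr_minima_snoc:
  "ltr_minima (w @ [x]) = ltr_minima w @ (if \<forall>y\<in>set w. x < y then [x] else [])"
proof -
  have "[(w @ [x]) ! j. j \<leftarrow> [0..<length w], \<forall>i<j. (w @ [x]) ! i > (w @ [x]) ! j]
      = ltr_minima w"
    unfolding ltr_minima_def
    by (rule arg_cong[where f = concat], rule map_cong) (auto simp: nth_append)
  moreover have "(\<forall>i<length w. (w @ [x]) ! i > x) \<longleftrightarrow> (\<forall>y\<in>set w. x < y)"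
    by (simp add: nth_append all_set_conv_all_nth)
  ultimately show ?thesis
    by (simp add: ltr_minima_def)
qed

lemma ltr_minima_Cons:
  "ltr_minima (y # xs) = y # ltr_minima (filter (\<lambda>x. x < y) xs)"
proof (induction xs rule: rev_induct)
  case Nil
  show ?case
    using ltr_minima_snoc[of "[]" y] by simp
next
  case (snoc x xs)
  have "(\<forall>z\<in>set (y # xs). x < z) \<longleftrightarrow> x < y \<and> (\<forall>z\<in>set (filter (\<lambda>x. x < y) xs). x < z)"
    by auto
  then show ?case
    using snoc.IH by (simp add: ltr_minima_snoc[of "y # xs", simplified] ltr_minima_snoc)
qed

lemma ltr_minima_append_cong:
  assumes "ltr_minima u = ltr_minima w" and "set u = set w"
  shows "ltr_minima (u @ v) = ltr_minima (w @ v)"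
proof (induction v rule: rev_induct)
  case Nil
  show ?case
    using assms(1) by simp
next
  case (snoc x v)
  then show ?case
    using assms(2) ltr_minima_snoc[of "u @ v" x] ltr_minima_snoc[of "w @ v" x]
    by (simp flip: append_assoc)
qed

lemma step2_ltr_minima: "step2 p q \<Longrightarrow> ltr_minima p = ltr_minima q"
proof (induction rule: step2.induct)
  case (rule_bac a b c u v)
  have "ltr_minima (u @ [b, a, c]) = ltr_minima (u @ [b, c, a])"
    using rule_bac ltr_minima_snoc[of "u @ [b, a]" c] ltr_minima_snoc[of "u @ [b, c]" a]
      ltr_minima_snoc[of "u @ [b]" a] ltr_minima_snoc[of "u @ [b]" c]
    by auto
  then show ?case
    using ltr_minima_append_cong[of "u @ [b, a, c]" "u @ [b, c, a]" v] by auto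
next
  case (rule_abc a b c u v)
  have "ltr_minima (u @ [a, b, c]) = ltr_minima (u @ [a, c, b])"
    using rule_abc ltr_minima_snoc[of "u @ [a, b]" c] ltr_minima_snoc[of "u @ [a, c]" b]
      ltr_minima_snoc[of "u @ [a]" b] ltr_minima_snoc[of "u @ [a]" c]
    by auto
  then show ?case
    using ltr_minima_append_cong[of "u @ [a, b, c]" "u @ [a, c, b]" v] by auto
qed

lemma equiv2_ltr_minima: "equiv2 p q \<Longrightarrow> ltr_minima p = ltr_minima q"
  unfolding equiv2_def by (induction rule: equivclp_induct) (auto dest: step2_ltr_minima)

lemma step2_append_context: "step2 p q \<Longrightarrow> step2 (u @ p @ v) (u @ q @ v)"
proof (induction rule: step2.induct)
  case (rule_bac a b c x y)
  then show ?case
    using step2.rule_bac[of a b c "u @ x" "y @ v"] by simp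
next
  case (rule_abc a b c x y)
  then show ?case
    using step2.rule_abc[of a b c "u @ x" "y @ v"] by simp
qed

lemma equiv2_append_context: "equiv2 p q \<Longrightarrow> equiv2 (u @ p @ v) (u @ q @ v)"
  unfolding equiv2_def
  by (induction rule: equivclp_induct) (auto intro: equivclp_into_equivclp step2_append_context)

lemma equiv2_sym: "equiv2 p q \<Longrightarrow> equiv2 q p"
  unfolding equiv2_def by (rule equivclp_sym)

lemma equiv2_trans [trans]: "equiv2 p q \<Longrightarrow> equiv2 q r \<Longrightarrow> equiv2 p r"
  unfolding equiv2_def by (rule equivclp_trans)

lemma equiv2_swap_below_max:
  assumes "x \<noteq> y" and "x < M" and "y < M"
  shows "equiv2 (u @ [x, M, y] @ v) (u @ [x, y, M] @ v)"
proof -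
  have "step2 (u @ [x, y, M] @ v) (u @ [x, M, y] @ v)"
    using assms step2.rule_bac[of y x M u v] step2.rule_abc[of x y M u v]
    by (cases "y < x") auto
  then show ?thesis
    unfolding equiv2_def by blast
qed

lemma equiv2_move_max_to_end:
  assumes "distinct (x # v)" and "x < M" and "\<forall>y\<in>set v. y < M"
  shows "equiv2 (u @ [x, M] @ v) (u @ x # v @ [M])"
  using assms
proof (induction v arbitrary: u x)
  case Nil
  then show ?case
    by (simp add: equiv2_def)
next
  case (Cons y v)
  have "equiv2 (u @ [x, M] @ y # v) ((u @ [x]) @ [y, M] @ v)"
    using equiv2_swap_below_max[of x y M u v] Cons.prems by simp
  also have "equiv2 \<dots> ((u @ [x]) @ y # v @ [M])"
    using Cons.IH[of y "u @ [x]"] Cons.prems by simp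
  finally show ?case
    by simp
qed

lemma equiv2_remove1_max:
  assumes "distinct p" and "M \<in> set p" and "\<forall>x\<in>set p. x \<le> M" and "hd p \<noteq> M"
  shows "equiv2 p (remove1 M p @ [M])"
proof -
  obtain w v where p: "p = w @ M # v"
    using assms(2) by (meson split_list)
  with assms(4) obtain u x where w: "w = u @ [x]"
    by (cases w rule: rev_exhaust) auto
  have "M \<notin> set w" "distinct (x # v)" "x < M" "\<forall>y\<in>set v. y < M"
    using assms(1,3) unfolding p w by (auto simp: order.order_iff_strict)
  then show ?thesis
    using equiv2_move_max_to_end[of x v M u] unfolding p w by (simp add: remove1_append)
qed

lemma ltr_minima_remove1_max:
  assumes "distinct p" and "M \<in> set p" and "\<forall>x\<in>set p. x \<le> M" and "hd p \<noteq> M"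
  shows "ltr_minima (remove1 M p) = ltr_minima p"
proof -
  have "p \<noteq> []"
    using assms(2) by auto
  then have "hd p \<in> set (remove1 M p)" "hd p < M"
    using assms by (auto simp: order.order_iff_strict)
  then have "\<not> (\<forall>y\<in>set (remove1 M p). M < y)"
    using less_asym by blast
  then have "ltr_minima (remove1 M p @ [M]) = ltr_minima (remove1 M p)"
    by (simp add: ltr_minima_snoc)
  then show ?thesis
    using equiv2_ltr_minima[OF equiv2_remove1_max[OF assms]] by simp
qed

lemma ltr_minima_eq_imp_equiv2:
  assumes "distinct p" and "distinct q" and "set p = set q" and "ltr_minima p = ltr_minima q"
  shows "equiv2 p q"
  using assms
proof (induction "length p" arbitrary: p q rule: less_induct)
  case less
  show ?case
  proof (cases p)
    case Nil
    then show ?thesis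
      using less.prems by (simp add: equiv2_def)
  next
    case (Cons y p')
    with less.prems(4) obtain q' where q: "q = y # q'"
      by (cases q) (auto simp: ltr_minima_Cons)
    define M where "M = Max (set p)"
    have M: "M \<in> set p" "\<forall>x\<in>set p. x \<le> M"
      unfolding M_def using Cons by (simp_all del: set_simps(2))
    show ?thesis
    proof (cases "y = M")
      case True
      have "\<forall>x\<in>set p'. x < y" "\<forall>x\<in>set q'. x < y"
        using M less.prems(1-3) True unfolding Cons q by (auto simp: order.order_iff_strict)
      then have "ltr_minima p' = ltr_minima q'"
        using less.prems(4) unfolding Cons q by (simp add: ltr_minima_Cons)
      moreover have "set p' = set q'"
        using less.prems(1-3) unfolding Cons q by auto
      ultimately have "equiv2 p' q'"
        using less.hyps less.prems(1,2) unfolding Cons q by simp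
      then show ?thesis
        using equiv2_append_context[of p' q' "[y]" "[]"] unfolding Cons q by simp
    next
      case False
      have M_q: "M \<in> set q" "\<forall>x\<in>set q. x \<le> M" "hd q \<noteq> M"
        using M False less.prems(3) q by auto
      have "hd p \<noteq> M"
        using False Cons by simp
      note remove_p = equiv2_remove1_max[OF less.prems(1) M this]
        ltr_minima_remove1_max[OF less.prems(1) M this]
      note remove_q = equiv2_remove1_max[OF less.prems(2) M_q]
        ltr_minima_remove1_max[OF less.prems(2) M_q]
      have "length (remove1 M p) < length p"
        using M(1) length_pos_if_in_set[OF M(1)] by (simp add: length_remove1)
      then have "equiv2 (remove1 M p) (remove1 M q)"
        using less.hyps less.prems remove_p(2) remove_q(2) by simp
      then have "equiv2 (remove1 M p @ [M]) (remove1 M q @ [M])"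
        using equiv2_append_context[of _ _ "[]" "[M]"] by simp
      then show ?thesis
        using remove_p(1) remove_q(1) by (blast intro: equiv2_trans equiv2_sym)
    qed
  qed
qed

theorem mainTheorem11:
  fixes n :: nat and p q :: "nat list"
  assumes "is_perm n p" and "is_perm n q"
  shows "equiv2 p q \<longleftrightarrow> ltr_minima p = ltr_minima q"
proof -
  have "distinct p" "distinct q" "set p = set q"
    using assms unfolding is_perm_def by auto
  then show ?thesis
    using equiv2_ltr_minima ltr_minima_eq_imp_equiv2 by blast
qed

end
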